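(* For each environment $i\in\{1,\dots,N\}$ let $L_i>0$ be a constant such that $\|\mu^{\pi_1}_i-\mu^{\pi_2}_i\|_2\le L_i\|\pi_1-\pi_2\|_2$ for all $\pi_1,\pi_2\in\Pi$, and let $L=\max_{i}L_i$. Then for all $\pi_1,\pi_2\in\Pi$ and all $\beta\in\Delta_N$, $$|V_\beta(\pi_1)-V_\beta(\pi_2)|\le n_c\,L\,\sqrt{|\mathcal{S}||\mathcal{A}|}\,\|\pi_1-\pi_2\|_2 .$$
   Context: Let $\mathcal{S},\mathcal{A}$ be finite sets, $\gamma\in(0,1)$, $\rho$ a probability distribution on $\mathcal{S}$, and for $i=1,\dots,N$ let environment $i$ be the Markov decision process $(\mathcal{S},\mathcal{A},P^i,\gamma,\rho)$ with transition kernel $P^i$. $\Pi$ is the set of stationary policies $\pi:\mathcal{S}\to\Delta(\mathcal{A})$, with $\pi(s,a)$ the probability of $a$ at $s$, identified with vectors in $\mathbb{R}^{|\mathcal{S}||\mathcal{A}|}$. For $\pi\in\Pi$, $\mu^\pi_i(s,a)=\sum_{t\ge0}\gamma^t\mathbb{P}^{\pi,i}_\rho[s_t=s,a_t=a]$ is the discounted occupation measure, where $\mathbb{P}^{\pi,i}_\rho$ is the trajectory law with $s_0\sim\rho$, $a_t\sim\pi(s_t,\cdot)$, $s_{t+1}\sim P^i(\cdot\mid s_t,a_t)$. For each $i$ an expert policy $\pi^{E_i}\in\Pi$ is given. The cost basis matrix is $\Phi=[\phi_1,\dots,\phi_{n_c}]\in\mathbb{R}^{|\mathcal{S}||\mathcal{A}|\times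 n_c}$ with $\|\phi_j\|_\infty\le1$ for all $j$. $\Delta_N=\{\beta\in\mathbb{R}^N_{\ge0}:\sum_i\beta_i=1\}$. The performance function is $V_\beta(\pi)=\sum_{i=1}^N\beta_i\|\Phi^\top\mu^\pi_i-\Phi^\top\mu^{\pi^{E_i}}_i\|_1$. *)

theory Defs
  imports "HOL-Analysis.Analysis"
begin

text \<open>States 's and actions 'a are finite types. A stationary policy is
  p :: 's => 'a => real, p s a = probability of action a in state s.
  Transition kernel P s a s' = probability of s' given (s,a).\<close>

definition is_policy :: "('s::finite \<Rightarrow> 'a::finite \<Rightarrow> real) \<Rightarrow> bool" where
  "is_policy p \<longleftrightarrow> (\<forall>s a. 0 \<le> p s a) \<and> (\<forall>s. (\<Sum>a\<in>UNIV. p s a) = 1)"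

definition is_kernel :: "('s::finite \<Rightarrow> 'a::finite \<Rightarrow> 's \<Rightarrow> real) \<Rightarrow> bool" where
  "is_kernel P \<longleftrightarrow> (\<forall>s a s'. 0 \<le> P s a s') \<and> (\<forall>s a. (\<Sum>s'\<in>UNIV. P s a s') = 1)"

definition is_distr :: "('s::finite \<Rightarrow> real) \<Rightarrow> bool" where
  "is_distr rho \<longleftrightarrow> (\<forall>s. 0 \<le> rho s) \<and> (\<Sum>s\<in>UNIV. rho s) = 1"

text \<open>Marginal law of (s_t, a_t) under the trajectory law with s_0 ~ rho,
  a_t ~ p(s_t), s_{t+1} ~ P(.|s_t,a_t).\<close>
fun sa_dist :: "('s::finite \<Rightarrow> real) \<Rightarrow> ('s \<Rightarrow> 'a::finite \<Rightarrow> 's \<Rightarrow> real)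
    \<Rightarrow> ('s \<Rightarrow> 'a \<Rightarrow> real) \<Rightarrow> nat \<Rightarrow> 's \<Rightarrow> 'a \<Rightarrow> real" where
  "sa_dist rho P p 0 s a = rho s * p s a"
| "sa_dist rho P p (Suc t) s' a' =
     (\<Sum>s\<in>UNIV. \<Sum>a\<in>UNIV. sa_dist rho P p t s a * P s a s') * p s' a'"

text \<open>Discounted occupation measure mu^p(s,a) = sum_t gamma^t P[s_t=s, a_t=a].\<close>
definition occ :: "real \<Rightarrow> ('s::finite \<Rightarrow> real) \<Rightarrow> ('s \<Rightarrow> 'a::finite \<Rightarrow> 's \<Rightarrow> real)
    \<Rightarrow> ('s \<Rightarrow> 'a \<Rightarrow> real) \<Rightarrow> 's \<Rightarrow> 'a \<Rightarrow> real" where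
  "occ gamma rho P p s a = (\<Sum>t. gamma ^ t * sa_dist rho P p t s a)"

definition l2 :: "('s::finite \<Rightarrow> 'a::finite \<Rightarrow> real) \<Rightarrow> real" where
  "l2 f = sqrt (\<Sum>s\<in>UNIV. \<Sum>a\<in>UNIV. (f s a)\<^sup>2)"

text \<open>|| Phi^T mu - Phi^T nu ||_1 with Phi = [phi 0, ..., phi (nc-1)].\<close>
definition feat_l1_dist :: "nat \<Rightarrow> (nat \<Rightarrow> 's::finite \<Rightarrow> 'a::finite \<Rightarrow> real)
    \<Rightarrow> ('s \<Rightarrow> 'a \<Rightarrow> real) \<Rightarrow> ('s \<Rightarrow> 'a \<Rightarrow> real) \<Rightarrow> real" where
  "feat_l1_dist nc phi mu nu =
     (\<Sum>j<nc. \<bar>(\<Sum>s\<in>UNIV. \<Sum>a\<in>UNIV. phi j s a * mu s a)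
              - (\<Sum>s\<in>UNIV. \<Sum>a\<in>UNIV. phi j s a * nu s a)\<bar>)"

text \<open>V_beta(p) = sum_i beta_i ||Phi^T mu_i^p - Phi^T mu_i^{p^{E_i}}||_1,
  environments indexed by i < N.\<close>
definition V :: "nat \<Rightarrow> real \<Rightarrow> ('s::finite \<Rightarrow> real) \<Rightarrow> (nat \<Rightarrow> 's \<Rightarrow> 'a::finite \<Rightarrow> 's \<Rightarrow> real)
    \<Rightarrow> (nat \<Rightarrow> 's \<Rightarrow> 'a \<Rightarrow> real) \<Rightarrow> nat \<Rightarrow> (nat \<Rightarrow> 's \<Rightarrow> 'a \<Rightarrow> real)
    \<Rightarrow> (nat \<Rightarrow> real) \<Rightarrow> ('s \<Rightarrow> 'a \<Rightarrow> real) \<Rightarrow> real" where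
  "V N gamma rho P piE nc phi beta p =
     (\<Sum>i<N. beta i * feat_l1_dist nc phi (occ gamma rho (P i) p) (occ gamma rho (P i) (piE i)))"

end

theory Submission
  imports Defs
begin

text \<open>Each summand of V_beta changes by at most n_c ||mu_i^pi1 - mu_i^pi2||_1: by the reverse
  triangle inequality the expert term cancels, and every feature has sup-norm at most 1.
  Cauchy-Schwarz bounds the 1-norm by sqrt(|S||A|) times the 2-norm, the Lipschitz hypothesis
  bounds that by L_i <= L times ||pi1 - pi2||_2, and V_beta is a convex combination of its
  summands. The MDP structure enters only through the Lipschitz hypothesis.\<close>

definition l1 :: "('s::finite \<Rightarrow> 'a::finite \<Rightarrow> real) \<Rightarrow> real" where
  "l1 f = (\<Sum>s\<in>UNIV. \<Sum>a\<in>UNIV. \<bar>f s a\<bar>)"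

lemma l2_eq_L2_set: "l2 f = L2_set (case_prod f) UNIV"
  unfolding l2_def L2_set_def UNIV_Times_UNIV[symmetric]
  by (simp add: sum.cartesian_product case_prod_beta del: UNIV_Times_UNIV)

lemma l1_le_sqrt_card_l2:
  fixes f :: "'s::finite \<Rightarrow> 'a::finite \<Rightarrow> real"
  shows "l1 f \<le> sqrt (real (CARD('s) * CARD('a))) * l2 f"
proof -
  have "l1 f = (\<Sum>x\<in>UNIV. \<bar>case_prod f x\<bar> * \<bar>1\<bar>)"
    unfolding l1_def UNIV_Times_UNIV[symmetric]
    by (simp add: sum.cartesian_product case_prod_beta del: UNIV_Times_UNIV)
  also have "\<dots> \<le> L2_set (case_prod f) UNIV * L2_set (\<lambda>_. 1) (UNIV :: ('s \<times> 'a) set)"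
    by (rule L2_set_mult_ineq)
  also have "\<dots> = sqrt (real (CARD('s) * CARD('a))) * l2 f"
    by (simp add: l2_eq_L2_set L2_set_constant card_cartesian_product UNIV_Times_UNIV[symmetric] del: UNIV_Times_UNIV)
  finally show ?thesis .
qed

lemma abs_inner_diff_le_l1:
  fixes g mu1 mu2 :: "'s::finite \<Rightarrow> 'a::finite \<Rightarrow> real"
  assumes "\<And>s a. \<bar>g s a\<bar> \<le> 1"
  shows "\<bar>(\<Sum>s\<in>UNIV. \<Sum>a\<in>UNIV. g s a * mu1 s a) - (\<Sum>s\<in>UNIV. \<Sum>a\<in>UNIV. g s a * mu2 s a)\<bar>
           \<le> l1 (\<lambda>s a. mu1 s a - mu2 s a)"
proof -
  have "\<bar>(\<Sum>s\<in>UNIV. \<Sum>a\<in>UNIV. g s a * mu1 s a) - (\<Sum>s\<in>UNIV. \<Sum>a\<in>UNIV. g s a * mu2 s a)\<bar>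
      = \<bar>\<Sum>s\<in>UNIV. \<Sum>a\<in>UNIV. g s a * (mu1 s a - mu2 s a)\<bar>"
    by (simp add: sum_subtractf right_diff_distrib)
  also have "\<dots> \<le> (\<Sum>s\<in>UNIV. \<Sum>a\<in>UNIV. \<bar>g s a * (mu1 s a - mu2 s a)\<bar>)"
    by (rule order_trans[OF sum_abs sum_mono[OF sum_abs]])
  also have "\<dots> \<le> l1 (\<lambda>s a. mu1 s a - mu2 s a)"
    unfolding l1_def abs_mult
    by (intro sum_mono mult_left_le_one_le) (simp_all add: assms)
  finally show ?thesis .
qed

lemma feat_l1_dist_diff_le:
  fixes mu1 mu2 nu :: "'s::finite \<Rightarrow> 'a::finite \<Rightarrow> real"
  assumes "\<And>j s a. j < nc \<Longrightarrow> \<bar>phi j s a\<bar> \<le> 1"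
  shows "\<bar>feat_l1_dist nc phi mu1 nu - feat_l1_dist nc phi mu2 nu\<bar>
           \<le> real nc * l1 (\<lambda>s a. mu1 s a - mu2 s a)"
proof -
  let ?ip = "\<lambda>j mu. \<Sum>s\<in>UNIV. \<Sum>a\<in>UNIV. phi j s a * mu s a"
  have "\<bar>feat_l1_dist nc phi mu1 nu - feat_l1_dist nc phi mu2 nu\<bar>
      = \<bar>\<Sum>j<nc. \<bar>?ip j mu1 - ?ip j nu\<bar> - \<bar>?ip j mu2 - ?ip j nu\<bar>\<bar>"
    unfolding feat_l1_dist_def by (simp add: sum_subtractf)
  also have "\<dots> \<le> (\<Sum>j<nc. \<bar>?ip j mu1 - ?ip j mu2\<bar>)"
    by (rule order_trans[OF sum_abs sum_mono]) linarith
  also have "\<dots> \<le> (\<Sum>j<nc. l1 (\<lambda>s a. mu1 s a - mu2 s a))"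
    by (intro sum_mono abs_inner_diff_le_l1) (simp add: assms)
  finally show ?thesis by simp
qed

lemma abs_convex_comb_diff_le:
  fixes w x y :: "'i \<Rightarrow> real"
  assumes "finite I" and "\<And>i. i \<in> I \<Longrightarrow> 0 \<le> w i" and "sum w I = 1"
    and "\<And>i. i \<in> I \<Longrightarrow> \<bar>x i - y i\<bar> \<le> K"
  shows "\<bar>(\<Sum>i\<in>I. w i * x i) - (\<Sum>i\<in>I. w i * y i)\<bar> \<le> K"
proof -
  have "\<bar>(\<Sum>i\<in>I. w i * x i) - (\<Sum>i\<in>I. w i * y i)\<bar> \<le> (\<Sum>i\<in>I. \<bar>w i * (x i - y i)\<bar>)"
    unfolding sum_subtractf[symmetric] right_diff_distrib by (rule sum_abs)
  also have "\<dots> \<le> (\<Sum>i\<in>I. w i * K)"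
    by (intro sum_mono) (simp add: abs_mult assms mult_left_mono)
  also have "\<dots> = K"
    by (simp add: sum_distrib_right[symmetric] assms(3))
  finally show ?thesis .
qed

theorem lemma3:
  fixes N nc :: nat
    and gamma :: real
    and rho :: "'s::finite \<Rightarrow> real"
    and P :: "nat \<Rightarrow> 's \<Rightarrow> 'a::finite \<Rightarrow> 's \<Rightarrow> real"
    and piE :: "nat \<Rightarrow> 's \<Rightarrow> 'a \<Rightarrow> real"
    and phi :: "nat \<Rightarrow> 's \<Rightarrow> 'a \<Rightarrow> real"
    and Lc :: "nat \<Rightarrow> real"
    and beta :: "nat \<Rightarrow> real"
    and pi1 pi2 :: "'s \<Rightarrow> 'a \<Rightarrow> real"
  assumes gamma: "0 < gamma" "gamma < 1"
    and rho: "is_distr rho"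
    and kern: "\<And>i. i < N \<Longrightarrow> is_kernel (P i)"
    and expert: "\<And>i. i < N \<Longrightarrow> is_policy (piE i)"
    and phi_bd: "\<And>j s a. j < nc \<Longrightarrow> \<bar>phi j s a\<bar> \<le> 1"
    and Lpos: "\<And>i. i < N \<Longrightarrow> 0 < Lc i"
    and Lip: "\<And>i p1 p2. i < N \<Longrightarrow> is_policy p1 \<Longrightarrow> is_policy p2 \<Longrightarrow>
               l2 (\<lambda>s a. occ gamma rho (P i) p1 s a - occ gamma rho (P i) p2 s a)
                 \<le> Lc i * l2 (\<lambda>s a. p1 s a - p2 s a)"
    and pol1: "is_policy pi1" and pol2: "is_policy pi2"
    and beta_nn: "\<And>i. i < N \<Longrightarrow> 0 \<le> beta i"
    and beta_sum: "(\<Sum>i<N. beta i) = 1"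
  shows "\<bar>V N gamma rho P piE nc phi beta pi1 - V N gamma rho P piE nc phi beta pi2\<bar>
           \<le> real nc * Max (Lc ` {..<N}) * sqrt (real (CARD('s) * CARD('a)))
               * l2 (\<lambda>s a. pi1 s a - pi2 s a)"
proof -
  let ?\<mu> = "\<lambda>i p. occ gamma rho (P i) p"
  let ?sqrt_card = "sqrt (real (CARD('s) * CARD('a)))"
  have l2_nonneg: "0 \<le> l2 (\<lambda>s a. pi1 s a - pi2 s a)"
    by (simp add: l2_eq_L2_set)
  have "\<bar>feat_l1_dist nc phi (?\<mu> i pi1) (?\<mu> i (piE i)) - feat_l1_dist nc phi (?\<mu> i pi2) (?\<mu> i (piE i))\<bar>
      \<le> real nc * Max (Lc ` {..<N}) * ?sqrt_card * l2 (\<lambda>s a. pi1 s a - pi2 s a)" if "i < N" for i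
  proof -
    have "Lc i \<le> Max (Lc ` {..<N})"
      using that by (intro Max_ge) auto
    have "\<bar>feat_l1_dist nc phi (?\<mu> i pi1) (?\<mu> i (piE i)) - feat_l1_dist nc phi (?\<mu> i pi2) (?\<mu> i (piE i))\<bar>
        \<le> real nc * l1 (\<lambda>s a. ?\<mu> i pi1 s a - ?\<mu> i pi2 s a)"
      by (rule feat_l1_dist_diff_le[OF phi_bd])
    also have "\<dots> \<le> real nc * (?sqrt_card * (Lc i * l2 (\<lambda>s a. pi1 s a - pi2 s a)))"
      by (intro mult_left_mono order_trans[OF l1_le_sqrt_card_l2] Lip that pol1 pol2) simp_all
    also have "\<dots> \<le> real nc * (?sqrt_card * (Max (Lc ` {..<N}) * l2 (\<lambda>s a. pi1 s a - pi2 s a)))"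
      by (intro mult_left_mono mult_right_mono \<open>Lc i \<le> Max (Lc ` {..<N})\<close> l2_nonneg) simp_all
    finally show ?thesis
      by (simp add: ac_simps)
  qed
  then show ?thesis
    unfolding V_def by (intro abs_convex_comb_diff_le) (simp_all add: beta_nn beta_sum)
qed

end
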